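(* Let $H$ be a graph with $n$ vertices and at least $n+1$ edges. Then $H$ contains a cycle of length at most $\frac{2n}{3}+1$.
   Context: Graphs may contain loops and parallel edges; a loop is a cycle of length 1 and two parallel edges form a cycle of length 2. *)

theory Defs
  imports Complex_Main
begin

text \<open>A finite multigraph (loops and parallel edges allowed): vertex set V, edge set E
  (edge identifiers), and an endpoint map; an edge e joins u and v if its endpoint pair
  is (u,v) or (v,u).\<close>

definition multigraph :: "'a set \<Rightarrow> 'e set \<Rightarrow> ('e \<Rightarrow> 'a \<times> 'a) \<Rightarrow> bool" where
  "multigraph V E ends \<longleftrightarrow> finite V \<and> finite E \<and>
     (\<forall>e\<in>E. fst (ends e) \<in> V \<and> snd (ends e) \<in> V)"

definition joins :: "('e \<Rightarrow> 'a \<times> 'a) \<Rightarrow> 'e \<Rightarrow> 'a \<Rightarrow> 'a \<Rightarrow> bool" where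
  "joins ends e u v \<longleftrightarrow> ends e = (u, v) \<or> ends e = (v, u)"

text \<open>For k = 1 this is a loop, for
  k = 2 a pair of parallel edges.\<close>

definition is_cycle :: "'a set \<Rightarrow> 'e set \<Rightarrow> ('e \<Rightarrow> 'a \<times> 'a) \<Rightarrow> 'a list \<Rightarrow> 'e list \<Rightarrow> bool" where
  "is_cycle V E ends vs es \<longleftrightarrow> vs \<noteq> [] \<and> length es = length vs \<and>
     distinct vs \<and> distinct es \<and> set vs \<subseteq> V \<and> set es \<subseteq> E \<and>
     (\<forall>i<length vs. joins ends (es ! i) (vs ! i) (vs ! ((i + 1) mod length vs)))"

end

theory Submission
  imports Defs
begin

text \<open>Take a shortest cycle \<open>C\<close>, of length \<open>g\<close>. Deleting the edges of \<open>C\<close> and contracting its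
  vertices to one of them, \<open>a\<close>, leaves a multigraph with \<open>n - g + 1\<close> vertices and at least as
  many edges, hence a cycle \<open>C'\<close> of length \<open>k \<le> n - g + 1\<close>. If \<open>C'\<close> avoids \<open>a\<close>, it is a cycle
  of the original graph and \<open>g \<le> k\<close>. Otherwise \<open>C'\<close> lifts to a walk with \<open>k\<close> edges, none on
  \<open>C\<close>, between two vertices of \<open>C\<close>; closing it with the shorter arc of \<open>C\<close> gives a closed walk
  of length at most \<open>k + g/2\<close> whose first edge is not repeated, which contains a cycle, so
  \<open>g \<le> k + g/2\<close>. Either way \<open>g \<le> 2k \<le> 2(n - g + 1)\<close>, i.e. \<open>3g \<le> 2n + 2\<close>.\<close>

section \<open>Walks\<close>

fun walk :: "'e set \<Rightarrow> ('e \<Rightarrow> 'a \<times> 'a) \<Rightarrow> 'a list \<Rightarrow> 'e list \<Rightarrow> bool" where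
  "walk E ends [v] [] = True"
| "walk E ends (u # v # vs) (e # es) \<longleftrightarrow> e \<in> E \<and> joins ends e u v \<and> walk E ends (v # vs) es"
| "walk E ends _ _ = False"

lemma joins_sym: "joins ends e u v \<Longrightarrow> joins ends e v u"
  by (auto simp: joins_def)

lemma walk_conv_nth:
  "walk E ends vs es \<longleftrightarrow> length vs = Suc (length es) \<and> set es \<subseteq> E \<and>
     (\<forall>i<length es. joins ends (es ! i) (vs ! i) (vs ! Suc i))"
proof (induction es arbitrary: vs)
  case Nil
  then show ?case
    by (cases vs rule: remdups_adj.cases) auto
next
  case (Cons e es)
  then show ?case
    by (cases vs rule: remdups_adj.cases) (auto simp: All_less_Suc2)
qed

lemma walk_nonempty: "walk E ends vs es \<Longrightarrow> vs \<noteq> []"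
  by (auto simp: walk_conv_nth)

lemma walk_append:
  "walk E ends vs1 es1 \<Longrightarrow> walk E ends vs2 es2 \<Longrightarrow> last vs1 = hd vs2 \<Longrightarrow>
     walk E ends (vs1 @ tl vs2) (es1 @ es2)"
proof (induction E ends vs1 es1 rule: walk.induct)
  case (1 E ends v)
  then show ?case by (cases vs2) auto
qed auto

lemma walk_rev: "walk E ends vs es \<Longrightarrow> walk E ends (rev vs) (rev es)"
proof (induction E ends vs es rule: walk.induct)
  case (2 E ends u v vs e es)
  then have "walk E ends (rev (v # vs)) (rev es)" "walk E ends [v, u] [e]"
    by (auto simp: joins_sym)
  from walk_append[OF this] show ?case by simp
qed auto

lemma walk_drop:
  "walk E ends vs es \<Longrightarrow> j < length vs \<Longrightarrow> walk E ends (drop j vs) (drop j es)"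
  unfolding walk_conv_nth by (auto dest: in_set_dropD)

lemma walk_mono: "walk E ends vs es \<Longrightarrow> E \<subseteq> E' \<Longrightarrow> walk E' ends vs es"
  unfolding walk_conv_nth by auto

lemma walk_edge_ends_in_set:
  "walk E ends vs es \<Longrightarrow> e \<in> set es \<Longrightarrow> fst (ends e) \<in> set vs \<and> snd (ends e) \<in> set vs"
  by (induction E ends vs es rule: walk.induct) (auto simp: joins_def)

lemma walk_set_subset:
  assumes "multigraph V E ends" "walk E ends vs es" "es \<noteq> []"
  shows "set vs \<subseteq> V"
proof
  fix x assume "x \<in> set vs"
  then obtain i where i: "i < length vs" "x = vs ! i" by (auto simp: in_set_conv_nth)
  have len: "length vs = Suc (length es)" and E: "set es \<subseteq> E"
    and J: "\<forall>i<length es. joins ends (es ! i) (vs ! i) (vs ! Suc i)"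
    using assms(2) by (auto simp: walk_conv_nth)
  have ends_V: "fst (ends e) \<in> V" "snd (ends e) \<in> V" if "e \<in> set es" for e
    using that E assms(1) by (auto simp: multigraph_def)
  show "x \<in> V"
  proof (cases "i < length es")
    case True
    then show ?thesis using J ends_V[of "es ! i"] i by (auto simp: joins_def)
  next
    case False
    then obtain j where j: "i = Suc j" "j < length es"
      using i len assms(3) by (metis length_greater_0_conv less_SucE not0_implies_Suc lessI)
    then show ?thesis using J ends_V[of "es ! j"] i by (auto simp: joins_def)
  qed
qed

lemma walk_distinct_edges: "walk E ends vs es \<Longrightarrow> distinct vs \<Longrightarrow> distinct es"
proof (induction E ends vs es rule: walk.induct)
  case (2 E ends u v vs e es)
  have "e \<notin> set es"
  proof
    assume "e \<in> set es"
    moreover have "u = fst (ends e) \<or> u = snd (ends e)"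
      using 2(2) by (auto simp: joins_def)
    ultimately have "u \<in> set (v # vs)"
      using 2(2) walk_edge_ends_in_set[of E ends "v # vs" es e] by auto
    with 2(3) show False by simp
  qed
  with 2 show ?case by auto
qed auto

lemma walk_shortcut_to_path:
  "walk E ends vs es \<Longrightarrow> \<exists>ps qs. walk E ends ps qs \<and> distinct ps \<and> hd ps = hd vs \<and>
     last ps = last vs \<and> set ps \<subseteq> set vs \<and> set qs \<subseteq> set es \<and> length qs \<le> length es"
proof (induction E ends vs es rule: walk.induct)
  case (1 E ends v)
  then show ?case by (intro exI[of _ "[v]"] exI[of _ "[]"]) auto
next
  case (2 E ends u v vs e es)
  then obtain ps qs where P: "walk E ends ps qs" "distinct ps" "hd ps = v"
    "last ps = last (v # vs)" "set ps \<subseteq> set (v # vs)" "set qs \<subseteq> set es" "length qs \<le> length es"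
    by auto
  show ?case
  proof (cases "u \<in> set ps")
    case True
    then obtain j where j: "j < length ps" "ps ! j = u" by (auto simp: in_set_conv_nth)
    have "length ps = Suc (length qs)" using P(1) by (simp add: walk_conv_nth)
    then show ?thesis
      using walk_drop[OF P(1) j(1)] P j
      by (intro exI[of _ "drop j ps"] exI[of _ "drop j qs"])
        (auto simp: hd_drop_conv_nth dest: in_set_dropD)
  next
    case False
    have "ps = v # tl ps" using walk_nonempty[OF P(1)] P(3) by (cases ps) auto
    then have "walk E ends (u # ps) (e # qs)" using P(1) 2(2) by (metis walk.simps(2))
    then show ?thesis
      using P False walk_nonempty[OF P(1)]
      by (intro exI[of _ "u # ps"] exI[of _ "e # qs"]) auto
  qed
qed auto

lemma cycle_from_walk_and_closing_edge:
  assumes w: "walk E ends vs es" and V: "set vs \<subseteq> V"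
    and e: "e \<in> E" "e \<notin> set es" "joins ends e (last vs) (hd vs)"
  shows "\<exists>cs fs. is_cycle V E ends cs fs \<and> length cs \<le> Suc (length es)"
proof -
  obtain ps qs where P: "walk E ends ps qs" "distinct ps" "hd ps = hd vs"
    "last ps = last vs" "set ps \<subseteq> set vs" "set qs \<subseteq> set es" "length qs \<le> length es"
    using walk_shortcut_to_path[OF w] by blast
  have len: "length ps = Suc (length qs)" and "set qs \<subseteq> E"
    and J: "\<forall>i<length qs. joins ends (qs ! i) (ps ! i) (ps ! Suc i)"
    using P(1) by (auto simp: walk_conv_nth)
  have "is_cycle V E ends ps (qs @ [e])"
    unfolding is_cycle_def
  proof (intro conjI allI impI)
    show "distinct (qs @ [e])" using walk_distinct_edges[OF P(1,2)] P(6) e(2) by auto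
    fix i assume i: "i < length ps"
    show "joins ends ((qs @ [e]) ! i) (ps ! i) (ps ! ((i + 1) mod length ps))"
    proof (cases "i < length qs")
      case True
      then show ?thesis using J len by (simp add: nth_append)
    next
      case False
      have "ps \<noteq> []" using len by auto
      then have "last ps = ps ! length qs" "hd ps = ps ! 0"
        using len by (simp_all add: last_conv_nth hd_conv_nth)
      moreover have "i = length qs" using False i len by simp
      ultimately show ?thesis using e(3) P(3,4) len by (simp add: nth_append)
    qed
  qed (use len P \<open>set qs \<subseteq> E\<close> e V in auto)
  then show ?thesis using len P(7) by auto
qed

lemma cycle_from_closed_walk:
  assumes "multigraph V E ends" "walk E ends vs (e # es)" "e \<notin> set es" "hd vs = last vs"
  shows "\<exists>cs fs. is_cycle V E ends cs fs \<and> length cs \<le> Suc (length es)"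
proof -
  obtain u ws where vs: "vs = u # ws" and w: "walk E ends ws es" and "e \<in> E"
    and "joins ends e u (hd ws)"
    using assms(2) by (cases vs rule: remdups_adj.cases) auto
  moreover have "set ws \<subseteq> V" using walk_set_subset[OF assms(1,2)] vs by auto
  moreover have "last ws = u" using assms(4) vs walk_nonempty[OF w] by simp
  ultimately show ?thesis
    using cycle_from_walk_and_closing_edge assms(3) by metis
qed

section \<open>Cycles\<close>

lemma loop_is_cycle: "e \<in> E \<Longrightarrow> v \<in> V \<Longrightarrow> ends e = (v, v) \<Longrightarrow> is_cycle V E ends [v] [e]"
  by (simp add: is_cycle_def joins_def)

lemma is_cycle_mono:
  "is_cycle V E ends cs fs \<Longrightarrow> V \<subseteq> V' \<Longrightarrow> E \<subseteq> E' \<Longrightarrow> is_cycle V' E' ends cs fs"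
  unfolding is_cycle_def by auto

lemma is_cycle_length_le_card: "is_cycle V E ends cs fs \<Longrightarrow> finite V \<Longrightarrow> length cs \<le> card V"
  unfolding is_cycle_def by (metis card_mono distinct_card)

lemma is_cycle_rotate:
  assumes "is_cycle V E ends cs fs"
  shows "is_cycle V E ends (rotate r cs) (rotate r fs)"
proof -
  let ?k = "length cs"
  have len: "length fs = ?k" "?k > 0"
    and J: "\<And>m. m < ?k \<Longrightarrow> joins ends (fs ! m) (cs ! m) (cs ! ((m + 1) mod ?k))"
    using assms by (auto simp: is_cycle_def)
  show ?thesis
    unfolding is_cycle_def
  proof (intro conjI allI impI)
    fix i assume i: "i < length (rotate r cs)"
    have "((r + i) mod ?k + 1) mod ?k = (r + (i + 1) mod ?k) mod ?k"
      by (metis add_Suc_right mod_Suc_eq mod_add_right_eq Suc_eq_plus1)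
    then show "joins ends (rotate r fs ! i) (rotate r cs ! i)
        (rotate r cs ! ((i + 1) mod length (rotate r cs)))"
      using J[of "(r + i) mod ?k"] i len by (simp add: nth_rotate)
  qed (use assms in \<open>auto simp: is_cycle_def\<close>)
qed

lemma cycle_arc:
  assumes C: "is_cycle V E ends cs fs" and i: "i < length cs"
  shows "\<exists>A B. walk E ends A B \<and> hd A = cs ! i \<and> last A = cs ! ((i + t) mod length cs) \<and>
           set B \<subseteq> set fs \<and> length B = t"
proof (induction t)
  case 0
  then show ?case using i by (intro exI[of _ "[cs ! i]"] exI[of _ "[]"]) auto
next
  case (Suc t)
  let ?k = "length cs" and ?m = "(i + t) mod length cs"
  obtain A B where A: "walk E ends A B" "hd A = cs ! i" "last A = cs ! ?m" "set B \<subseteq> set fs"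
    "length B = t"
    using Suc.IH by blast
  have "?m < ?k" using i by (intro mod_less_divisor) linarith
  then have "fs ! ?m \<in> set fs" "set fs \<subseteq> E" "joins ends (fs ! ?m) (cs ! ?m) (cs ! ((?m + 1) mod ?k))"
    using C by (auto simp: is_cycle_def)
  moreover have "(?m + 1) mod ?k = (i + Suc t) mod ?k" by (simp add: mod_Suc_eq)
  ultimately have "walk E ends [cs ! ?m, cs ! ((i + Suc t) mod ?k)] [fs ! ?m]" by auto
  from walk_append[OF A(1) this] A(3)
  have "walk E ends (A @ [cs ! ((i + Suc t) mod ?k)]) (B @ [fs ! ?m])" by simp
  then show ?case
    using A walk_nonempty[OF A(1)] \<open>fs ! ?m \<in> set fs\<close> by fastforce
qed

lemma cycle_short_arc:
  assumes C: "is_cycle V E ends cs fs" and "a \<in> set cs" "b \<in> set cs"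
  shows "\<exists>A B. walk E ends A B \<and> hd A = a \<and> last A = b \<and> set B \<subseteq> set fs \<and>
           2 * length B \<le> length cs"
proof -
  let ?g = "length cs"
  obtain i j where ij: "i < ?g" "cs ! i = a" "j < ?g" "cs ! j = b"
    using assms(2,3) by (auto simp: in_set_conv_nth)
  define t where "t = (if i \<le> j then j - i else j + ?g - i)"
  define s where "s = (if j \<le> i then i - j else i + ?g - j)"
  have ts: "(i + t) mod ?g = j" "(j + s) mod ?g = i" "s + t \<le> ?g"
    using ij by (auto simp: t_def s_def)
  show ?thesis
  proof (cases "2 * t \<le> ?g")
    case True
    then show ?thesis using cycle_arc[OF C ij(1), of t] ij ts by auto
  next
    case False
    obtain A B where A: "walk E ends A B" "hd A = b" "last A = a" "set B \<subseteq> set fs" "length B = s"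
      using cycle_arc[OF C ij(3), of s] ij ts by auto
    then show ?thesis
      using walk_rev[OF A(1)] walk_nonempty[OF A(1)] False ts(3)
      by (intro exI[of _ "rev A"] exI[of _ "rev B"]) (auto simp: hd_rev last_rev)
  qed
qed

lemma shortest_cycle_exists:
  assumes "is_cycle V E ends cs0 fs0"
  shows "\<exists>cs fs. is_cycle V E ends cs fs \<and>
           (\<forall>ds hs. is_cycle V E ends ds hs \<longrightarrow> length cs \<le> length ds)"
  using ex_has_least_nat[of "\<lambda>(cs, fs). is_cycle V E ends cs fs" "(cs0, fs0)" "\<lambda>(cs, fs). length cs"]
    assms by fastforce

text \<open>Closing the walk with the shorter arc of the cycle between its endpoints.\<close>
lemma cycle_from_walk_between_cycle_vertices:
  assumes mg: "multigraph V E ends" and C: "is_cycle V E ends cs fs"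
    and W: "walk E ends ws (e # es)" "e \<notin> set es" "e \<notin> set fs"
    and ends_on_C: "hd ws \<in> set cs" "last ws \<in> set cs"
  shows "\<exists>ds hs. is_cycle V E ends ds hs \<and> 2 * length ds \<le> 2 * Suc (length es) + length cs"
proof -
  obtain A B where A: "walk E ends A B" "hd A = last ws" "last A = hd ws" "set B \<subseteq> set fs"
    "2 * length B \<le> length cs"
    using cycle_short_arc[OF C ends_on_C(2,1)] by blast
  have closed: "walk E ends (ws @ tl A) (e # es @ B)"
    using walk_append[OF W(1) A(1)] A(2) by simp
  have "hd (ws @ tl A) = last (ws @ tl A)"
    using A(2,3) walk_nonempty[OF W(1)] walk_nonempty[OF A(1)]
    by (cases A rule: remdups_adj.cases) auto
  moreover have "e \<notin> set (es @ B)" using W(2,3) A(4) by auto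
  ultimately obtain ds hs where "is_cycle V E ends ds hs" "length ds \<le> Suc (length (es @ B))"
    using cycle_from_closed_walk[OF mg closed] by blast
  then show ?thesis using A(5) by (intro exI[of _ ds] exI[of _ hs]) auto
qed

section \<open>Graphs with at least as many edges as vertices contain a cycle\<close>

definition incident_edges :: "'e set \<Rightarrow> ('e \<Rightarrow> 'a \<times> 'a) \<Rightarrow> 'a \<Rightarrow> 'e set" where
  "incident_edges E ends v = {e \<in> E. fst (ends e) = v \<or> snd (ends e) = v}"

lemma finite_incident_edges: "multigraph V E ends \<Longrightarrow> finite (incident_edges E ends v)"
  by (simp add: multigraph_def incident_edges_def)

lemma multigraph_delete_vertex:
  "multigraph V E ends \<Longrightarrow> multigraph (V - {v}) (E - incident_edges E ends v) ends"
  by (auto simp: multigraph_def incident_edges_def)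

lemma path_incident_edges_last:
  assumes "walk E ends ps qs" "distinct ps"
  shows "incident_edges E ends (last ps) \<inter> set qs \<subseteq> {last qs}"
proof
  fix e assume e: "e \<in> incident_edges E ends (last ps) \<inter> set qs"
  have len: "length ps = Suc (length qs)"
    and J: "\<forall>i<length qs. joins ends (qs ! i) (ps ! i) (ps ! Suc i)"
    using assms(1) by (auto simp: walk_conv_nth)
  obtain i where i: "i < length qs" "qs ! i = e" using e by (auto simp: in_set_conv_nth)
  have "ps \<noteq> []" using len by auto
  then have "last ps = ps ! length qs" using len by (simp add: last_conv_nth)
  moreover have "last ps = ps ! i \<or> last ps = ps ! Suc i"
    using e J i by (auto simp: incident_edges_def joins_def)
  ultimately have "ps ! length qs = ps ! i \<or> ps ! length qs = ps ! Suc i" by simp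
  then have "i = length qs - 1" using i len by (auto simp: nth_eq_iff_index_eq[OF assms(2)])
  moreover have "qs \<noteq> []" using i by auto
  ultimately show "e \<in> {last qs}" using i by (simp add: last_conv_nth)
qed

lemma path_extends_or_cycle:
  assumes mg: "multigraph V E ends" and P: "walk E ends ps qs" "distinct ps" "set ps \<subseteq> V"
    and deg: "2 \<le> card (incident_edges E ends (last ps))"
  shows "(\<exists>cs fs. is_cycle V E ends cs fs) \<or>
    (\<exists>y e. y \<in> V - set ps \<and> walk E ends (ps @ [y]) (qs @ [e]))"
proof -
  let ?x = "last ps" and ?I = "incident_edges E ends (last ps)"
  have "card (?I \<inter> set qs) \<le> 1"
    using card_mono[OF _ path_incident_edges_last[OF P(1,2)]] by simp
  moreover have "card (?I - set qs) = card ?I - card (?I \<inter> set qs)"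
    using finite_incident_edges[OF mg] by (simp add: card_Diff_subset_Int)
  ultimately have "card (?I - set qs) \<noteq> 0" using deg by linarith
  then have "?I - set qs \<noteq> {}" by (metis card.empty)
  then obtain e where e: "e \<in> E" "e \<notin> set qs" "fst (ends e) = ?x \<or> snd (ends e) = ?x"
    by (auto simp: incident_edges_def)
  define y where "y = (if fst (ends e) = ?x then snd (ends e) else fst (ends e))"
  have "joins ends e ?x y" using e(3) by (cases "ends e") (auto simp: y_def joins_def)
  have "y \<in> V" using e mg by (auto simp: y_def multigraph_def)
  show ?thesis
  proof (cases "y \<in> set ps")
    case True
    then obtain j where j: "j < length ps" "ps ! j = y" by (auto simp: in_set_conv_nth)
    have "set (drop j ps) \<subseteq> V" using P(3) by (auto dest: in_set_dropD)
    moreover have "e \<notin> set (drop j qs)" using e(2) by (auto dest: in_set_dropD)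
    moreover have "joins ends e (last (drop j ps)) (hd (drop j ps))"
      using \<open>joins ends e ?x y\<close> j by (simp add: hd_drop_conv_nth)
    ultimately have "\<exists>cs fs. is_cycle V E ends cs fs \<and> length cs \<le> Suc (length (drop j qs))"
      by (rule cycle_from_walk_and_closing_edge[OF walk_drop[OF P(1) j(1)] _ e(1)])
    then show ?thesis by blast
  next
    case False
    have "walk E ends (ps @ [y]) (qs @ [e])"
      using walk_append[OF P(1), of "[?x, y]" "[e]"] e(1) \<open>joins ends e ?x y\<close> by simp
    then show ?thesis using False \<open>y \<in> V\<close> by blast
  qed
qed

text \<open>Otherwise a maximal path could be extended forever.\<close>
lemma cycle_if_min_degree_two:
  assumes mg: "multigraph V E ends" and "V \<noteq> {}"
    and deg: "\<forall>v\<in>V. 2 \<le> card (incident_edges E ends v)"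
  shows "\<exists>cs fs. is_cycle V E ends cs fs"
proof (rule ccontr)
  assume acyclic: "\<nexists>cs fs. is_cycle V E ends cs fs"
  have "\<exists>ps qs. walk E ends ps qs \<and> distinct ps \<and> set ps \<subseteq> V \<and> length ps = Suc m" for m
  proof (induction m)
    case 0
    obtain v where "v \<in> V" using assms(2) by auto
    then show ?case by (intro exI[of _ "[v]"] exI[of _ "[]"]) auto
  next
    case (Suc m)
    then obtain ps qs where P: "walk E ends ps qs" "distinct ps" "set ps \<subseteq> V" "length ps = Suc m"
      by auto
    then have "last ps \<in> V" using walk_nonempty[OF P(1)] by auto
    then obtain y e where "y \<in> V - set ps" "walk E ends (ps @ [y]) (qs @ [e])"
      using path_extends_or_cycle[OF mg P(1-3)] deg acyclic by blast
    then show ?case using P by (intro exI[of _ "ps @ [y]"] exI[of _ "qs @ [e]"]) auto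
  qed
  then obtain ps where "distinct ps" "set ps \<subseteq> V" "length ps = Suc (card V)"
    by blast
  moreover have "finite V" using mg by (simp add: multigraph_def)
  ultimately show False
    using card_mono[of V "set ps"] by (simp add: distinct_card)
qed

lemma cycle_if_card_le:
  "multigraph V E ends \<Longrightarrow> V \<noteq> {} \<Longrightarrow> card V \<le> card E \<Longrightarrow> \<exists>cs fs. is_cycle V E ends cs fs"
proof (induction "card V" arbitrary: V E rule: less_induct)
  case less
  note mg = less.prems(1)
  have fin: "finite V" "finite E" using mg by (auto simp: multigraph_def)
  show ?case
  proof (cases "\<forall>v\<in>V. 2 \<le> card (incident_edges E ends v)")
    case True
    then show ?thesis using cycle_if_min_degree_two[OF mg less.prems(2)] by blast
  next
    case False
    then obtain v where v: "v \<in> V" "card (incident_edges E ends v) < 2" by (auto simp: not_le)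
    show ?thesis
    proof (cases "V = {v}")
      case True
      then have "E \<noteq> {}" using less.prems(3) by auto
      then obtain e where "e \<in> E" by blast
      then have "ends e = (v, v)" using mg True by (auto simp: multigraph_def intro: prod_eqI)
      then show ?thesis using loop_is_cycle[OF \<open>e \<in> E\<close> v(1)] by blast
    next
      case False
      let ?V = "V - {v}" and ?E = "E - incident_edges E ends v"
      have "card ?V < card V" using fin(1) v(1) by (rule card_Diff1_less)
      moreover have "?V \<noteq> {}" using False v(1) by auto
      moreover have "card ?E = card E - card (incident_edges E ends v)"
        using card_Diff_subset[OF finite_incident_edges[OF mg]] by (simp add: incident_edges_def)
      then have "card ?V \<le> card ?E"
        using v fin less.prems(3) by simp
      ultimately obtain cs fs where "is_cycle ?V ?E ends cs fs"
        using less.hyps[OF _ multigraph_delete_vertex[OF mg]] by blast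
      then show ?thesis using is_cycle_mono by blast
    qed
  qed
qed

section \<open>Contracting a set of vertices\<close>

definition collapse :: "'a set \<Rightarrow> 'a \<Rightarrow> 'a \<Rightarrow> 'a" where
  "collapse S a z = (if z \<in> S then a else z)"

definition contract_ends :: "'a set \<Rightarrow> 'a \<Rightarrow> ('e \<Rightarrow> 'a \<times> 'a) \<Rightarrow> 'e \<Rightarrow> 'a \<times> 'a" where
  "contract_ends S a ends e = map_prod (collapse S a) (collapse S a) (ends e)"

lemma collapse_eq_noncenter: "collapse S a z = u \<Longrightarrow> u \<noteq> a \<Longrightarrow> z = u"
  by (auto simp: collapse_def split: if_splits)

lemma collapse_eq_center: "collapse S a z = a \<Longrightarrow> a \<in> S \<Longrightarrow> z \<in> S"
  by (auto simp: collapse_def split: if_splits)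

lemma joins_contract_ends_lift:
  "joins (contract_ends S a ends) e u v \<Longrightarrow>
     \<exists>x y. joins ends e x y \<and> collapse S a x = u \<and> collapse S a y = v"
  by (cases "ends e") (auto simp: joins_def contract_ends_def)

lemma multigraph_contract:
  "multigraph V E ends \<Longrightarrow> multigraph (insert a (V - S)) (E - F) (contract_ends S a ends)"
  by (auto simp: multigraph_def contract_ends_def collapse_def)

lemma contracted_cycle_avoiding_center:
  assumes "is_cycle (insert a (V - S)) E' (contract_ends S a ends) cs fs" "a \<notin> set cs" "E' \<subseteq> E"
  shows "is_cycle V E ends cs fs"
  unfolding is_cycle_def
proof (intro conjI allI impI)
  fix i assume i: "i < length cs"
  let ?u = "cs ! i" and ?v = "cs ! ((i + 1) mod length cs)"
  have "(i + 1) mod length cs < length cs" using i by (intro mod_less_divisor) linarith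
  then have "?u \<in> set cs" "?v \<in> set cs" using i by auto
  then have "?u \<noteq> a" "?v \<noteq> a" using assms(2) by auto
  moreover have "joins (contract_ends S a ends) (fs ! i) ?u ?v"
    using assms(1) i by (simp add: is_cycle_def)
  ultimately show "joins ends (fs ! i) ?u ?v"
    using joins_contract_ends_lift collapse_eq_noncenter by metis
qed (use assms in \<open>auto simp: is_cycle_def\<close>)

lemma contracted_cycle_lift:
  assumes C: "is_cycle V' E' (contract_ends S a ends) cs fs" and "a \<in> S" "cs ! 0 = a"
  shows "\<exists>ws. walk E' ends ws fs \<and> hd ws \<in> S \<and> last ws \<in> S"
proof -
  let ?k = "length cs"
  have k: "?k > 0" "length fs = ?k" and "distinct cs" "set fs \<subseteq> E'"
    and J: "\<And>i. i < ?k \<Longrightarrow> joins (contract_ends S a ends) (fs ! i) (cs ! i) (cs ! ((i + 1) mod ?k))"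
    using C by (auto simp: is_cycle_def)
  obtain L R where LR: "\<And>i. i < ?k \<Longrightarrow> joins ends (fs ! i) (L i) (R i) \<and>
      collapse S a (L i) = cs ! i \<and> collapse S a (R i) = cs ! ((i + 1) mod ?k)"
    using joins_contract_ends_lift[OF J] by metis
  have L_Suc: "L (Suc i) = R i" if "Suc i < ?k" for i
  proof -
    have "cs ! Suc i \<noteq> cs ! 0"
      using nth_eq_iff_index_eq[OF \<open>distinct cs\<close>, of "Suc i" 0] that k(1) by fastforce
    then have "cs ! Suc i \<noteq> a" using assms(3) by simp
    moreover have "collapse S a (L (Suc i)) = cs ! Suc i" "collapse S a (R i) = cs ! Suc i"
      using LR[OF that] LR[of i] that by simp_all
    ultimately show ?thesis using collapse_eq_noncenter by metis
  qed
  define ws where "ws = L 0 # map R [0..<?k]"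
  have "walk E' ends ws fs"
    unfolding walk_conv_nth
  proof (intro conjI allI impI)
    fix i assume i: "i < length fs"
    have "ws ! i = L i" using L_Suc[of "i - 1"] i k by (cases i) (auto simp: ws_def)
    then show "joins ends (fs ! i) (ws ! i) (ws ! Suc i)" using LR[of i] i k by (simp add: ws_def)
  qed (use k \<open>set fs \<subseteq> E'\<close> in \<open>auto simp: ws_def\<close>)
  moreover have "hd ws \<in> S" "last ws \<in> S"
    using LR[of 0] LR[of "?k - 1"] k assms(2,3) collapse_eq_center by (auto simp: ws_def last_map)
  ultimately show ?thesis by blast
qed

lemma shortest_cycle_le_twice_contracted_cycle:
  assumes mg: "multigraph V E ends" and C: "is_cycle V E ends cs fs"
    and shortest: "\<And>ds hs. is_cycle V E ends ds hs \<Longrightarrow> length cs \<le> length ds"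
    and a: "a \<in> set cs"
    and C': "is_cycle (insert a (V - set cs)) (E - set fs) (contract_ends (set cs) a ends) cs' fs'"
  shows "length cs \<le> 2 * length cs'"
proof (cases "a \<in> set cs'")
  case False
  then show ?thesis using shortest contracted_cycle_avoiding_center[OF C' False] by fastforce
next
  case True
  then obtain r where "r < length cs'" "cs' ! r = a" by (auto simp: in_set_conv_nth)
  then have "rotate r cs' ! 0 = a" using nth_rotate[of 0 cs' r] by fastforce
  then obtain ws where
    ws: "walk (E - set fs) ends ws (rotate r fs')" "hd ws \<in> set cs" "last ws \<in> set cs"
    using contracted_cycle_lift[OF is_cycle_rotate[OF C'] a] by blast
  have "length fs' = length cs'" "cs' \<noteq> []" "distinct fs'" using C' by (auto simp: is_cycle_def)
  then obtain e es where e: "rotate r fs' = e # es" "length es + 1 = length cs'" "e \<notin> set es"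
    by (metis distinct.simps(2) distinct_rotate length_0_conv length_Cons length_rotate Suc_eq_plus1
        neq_Nil_conv)
  have "e \<notin> set fs" using ws(1) e(1) by (auto simp: walk_conv_nth)
  then obtain ds hs where "is_cycle V E ends ds hs" "2 * length ds \<le> 2 * Suc (length es) + length cs"
    using cycle_from_walk_between_cycle_vertices[OF mg C walk_mono[OF ws(1)[unfolded e(1)]] e(3)]
      ws(2,3) by blast
  then show ?thesis using shortest e(2) by fastforce
qed

theorem lemma3p2:
  fixes V :: "'a set" and E :: "'e set" and ends :: "'e \<Rightarrow> 'a \<times> 'a"
  assumes "multigraph V E ends"
    and "card E \<ge> card V + 1"
  shows "\<exists>vs es. is_cycle V E ends vs es \<and>
           real (length vs) \<le> 2 * real (card V) / 3 + 1"
proof -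
  have fin: "finite V" "finite E" using assms(1) by (auto simp: multigraph_def)
  have "E \<noteq> {}" using assms(2) by auto
  then have "V \<noteq> {}" using assms(1) by (auto simp: multigraph_def)
  then obtain cs0 fs0 where "is_cycle V E ends cs0 fs0"
    using cycle_if_card_le[OF assms(1)] assms(2) by fastforce
  then obtain cs fs where C: "is_cycle V E ends cs fs"
    and shortest: "\<And>ds hs. is_cycle V E ends ds hs \<Longrightarrow> length cs \<le> length ds"
    using shortest_cycle_exists by blast
  have dist: "card (set cs) = length cs" "card (set fs) = length cs" "set cs \<subseteq> V" "set fs \<subseteq> E"
    using C by (auto simp: is_cycle_def distinct_card)
  define a where "a = hd cs"
  have "a \<in> set cs" using C by (simp add: a_def is_cycle_def)
  let ?V = "insert a (V - set cs)" and ?E = "E - set fs"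
  have "length cs \<le> card V" using is_cycle_length_le_card[OF C fin(1)] .
  moreover have card_V: "card ?V = card V - length cs + 1"
    using dist fin \<open>a \<in> set cs\<close> by (simp add: card_Diff_subset finite_subset)
  moreover have "card ?E = card E - length cs" using dist fin by (simp add: card_Diff_subset finite_subset)
  ultimately obtain cs' fs' where C': "is_cycle ?V ?E (contract_ends (set cs) a ends) cs' fs'"
    using cycle_if_card_le[OF multigraph_contract[OF assms(1)]] assms(2) by fastforce
  have "length cs' \<le> card ?V" using is_cycle_length_le_card[OF C'] fin by simp
  moreover have "length cs \<le> 2 * length cs'"
    using shortest_cycle_le_twice_contracted_cycle[OF assms(1) C shortest \<open>a \<in> set cs\<close> C'] .
  ultimately have "3 * length cs \<le> 2 * card V + 2" using card_V \<open>length cs \<le> card V\<close> by linarith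
  then show ?thesis using C by (intro exI[of _ cs] exI[of _ fs]) auto
qed

end
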